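(* Let $\mathcal G$ be a good and equicontinuous pseudogroup on a compact metric space $X$, with good generating set $\mathcal G_1$ and compacted generating set $\mathcal G_2$. Then there is no Borel probability measure on $X$ that is $(\mathcal G,\mathcal G_2)$-weakly expansive.
   Context: $\mathrm{Homeo}(X)$: homeomorphisms $g:D_g\to R_g$ between open subsets of $X$, composed on natural domains $D_{h\circ g}=g^{-1}(D_h)$. A pseudogroup is a subset of $\mathrm{Homeo}(X)$ containing $\mathrm{id}_X$, closed under composition, inversion, restriction to open subsets, and gluing along open covers of the domain. $\Gamma$ generates $\mathcal G$ if $\bigcup_{g\in\Gamma}(D_g\cup R_g)=X$ and $\mathcal G$ is exactly the set of $g\in\mathrm{Homeo}(X)$ locally equal near each point of $D_g$ to a finite composition of elements of $\Gamma$ and their inverses. A finite symmetric (containing $\mathrm{id}_X$, closed under inverses) generating set $\mathcal G_1$ is good if for each $g\in\mathcal G_1$ there is a compact $K_g\subset D_g$ such that $\mathcal G_2=\{g|_{\mathrm{int}(K_g)}:g\in\mathcal G_1\}$ still generates $\mathcal G$ ($\mathcal G_2$ is the compacted generating set; $\mathcal G$ is good if it has a good generating set). $\mathcal G$ is equicontinuous if it has a generating set $\Gamma$ closed under composition and inversion and satisfying: for every $\varepsilon>0$ there is $\delta>0$ such that for all $x,y\in X$ and $g\in\Gamma$ with $x,y\in D_g$, $d(x,y)<\delta\Rightarrow d(g(x),g(y))<\varepsilon$. Let $\mathcal G^2_n=\{h_1\circ\cdots\circ h_n:h_j\in\mathcal G_2\}$, $\mathcal G^{2,x}_n=\{g\in\mathcal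 G^2_n:x\in D_g\}$, $\Phi^2_\delta(x)=\{y:d(g(x),g(y))\le\delta\ \forall n\in\mathbb N,\ \forall g\in\mathcal G^{2,x}_n\cap\mathcal G^{2,y}_n\}$. A Borel probability measure $\mu$ is $(\mathcal G,\mathcal G_2)$-weakly expansive if there is $\delta>0$ with $\mu(\Phi^2_\delta(x))=0$ for $\mu$-a.e. $x$. *)

theory Defs
  imports "HOL-Analysis.Analysis" "HOL-Probability.Probability"
begin

text \<open>A partial map on X is represented as a pair (D, f): domain D and map f,
  normalised so that f is undefined outside D (f \<in> extensional D).\<close>

type_synonym 'a pmap = "'a set \<times> ('a \<Rightarrow> 'a)"

definition pdom :: "'a pmap \<Rightarrow> 'a set" where "pdom g = fst g"
definition pfun :: "'a pmap \<Rightarrow> 'a \<Rightarrow> 'a" where "pfun g = snd g"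
definition pran :: "'a pmap \<Rightarrow> 'a set" where "pran g = pfun g ` pdom g"

definition phomeo :: "'a::topological_space set \<Rightarrow> 'a pmap \<Rightarrow> bool" where
  "phomeo X g \<longleftrightarrow> openin (top_of_set X) (pdom g) \<and> openin (top_of_set X) (pran g)
     \<and> (\<exists>h. homeomorphism (pdom g) (pran g) (pfun g) h) \<and> pfun g \<in> extensional (pdom g)"

definition pcomp :: "'a pmap \<Rightarrow> 'a pmap \<Rightarrow> 'a pmap" where
  "pcomp h g = (let D = pdom g \<inter> pfun g -` pdom h in (D, restrict (pfun h \<circ> pfun g) D))"

definition pinv :: "'a pmap \<Rightarrow> 'a pmap" where
  "pinv g = (pran g, restrict (inv_into (pdom g) (pfun g)) (pran g))"

definition prestr :: "'a pmap \<Rightarrow> 'a set \<Rightarrow> 'a pmap" where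
  "prestr g U = (U, restrict (pfun g) U)"

definition pid :: "'a set \<Rightarrow> 'a pmap" where
  "pid X = (X, restrict id X)"

definition pword :: "'a set \<Rightarrow> 'a pmap list \<Rightarrow> 'a pmap" where
  "pword X ws = foldr pcomp ws (pid X)"

definition pseudogroup :: "'a::topological_space set \<Rightarrow> 'a pmap set \<Rightarrow> bool" where
  "pseudogroup X G \<longleftrightarrow>
     G \<subseteq> Collect (phomeo X) \<and> pid X \<in> G
     \<and> (\<forall>g\<in>G. \<forall>h\<in>G. pcomp h g \<in> G)
     \<and> (\<forall>g\<in>G. pinv g \<in> G)
     \<and> (\<forall>g\<in>G. \<forall>U. openin (top_of_set X) U \<and> U \<subseteq> pdom g \<longrightarrow> prestr g U \<in> G)
     \<and> (\<forall>g. phomeo X g \<and>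
            (\<forall>x\<in>pdom g. \<exists>U. openin (top_of_set X) U \<and> x \<in> U \<and> U \<subseteq> pdom g \<and> prestr g U \<in> G)
            \<longrightarrow> g \<in> G)"

definition generates :: "'a::topological_space set \<Rightarrow> 'a pmap set \<Rightarrow> 'a pmap set \<Rightarrow> bool" where
  "generates X \<Gamma> G \<longleftrightarrow>
     \<Gamma> \<subseteq> Collect (phomeo X)
     \<and> (\<Union>g\<in>\<Gamma>. pdom g \<union> pran g) = X
     \<and> G = {g. phomeo X g \<and>
              (\<forall>x\<in>pdom g. \<exists>U ws. openin (top_of_set X) U \<and> x \<in> U \<and> U \<subseteq> pdom g
                  \<and> set ws \<subseteq> \<Gamma> \<union> pinv ` \<Gamma>
                  \<and> U \<subseteq> pdom (pword X ws)
                  \<and> (\<forall>y\<in>U. pfun g y = pfun (pword X ws) y))}"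

definition equicontinuous_pg :: "'a::metric_space set \<Rightarrow> 'a pmap set \<Rightarrow> bool" where
  "equicontinuous_pg X G \<longleftrightarrow>
     (\<exists>\<Gamma>. generates X \<Gamma> G
        \<and> (\<forall>g\<in>\<Gamma>. \<forall>h\<in>\<Gamma>. pcomp h g \<in> \<Gamma>)
        \<and> (\<forall>g\<in>\<Gamma>. pinv g \<in> \<Gamma>)
        \<and> (\<forall>\<epsilon>>0. \<exists>\<delta>>0. \<forall>x\<in>X. \<forall>y\<in>X. \<forall>g\<in>\<Gamma>.
              x \<in> pdom g \<and> y \<in> pdom g \<and> dist x y < \<delta>
              \<longrightarrow> dist (pfun g x) (pfun g y) < \<epsilon>))"

definition compacted :: "'a::topological_space set \<Rightarrow> 'a pmap set \<Rightarrow> ('a pmap \<Rightarrow> 'a set) \<Rightarrow> 'a pmap set" where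
  "compacted X G1 K = (\<lambda>g. prestr g ((top_of_set X) interior_of (K g))) ` G1"

definition good_generating_set ::
  "'a::topological_space set \<Rightarrow> 'a pmap set \<Rightarrow> 'a pmap set \<Rightarrow> ('a pmap \<Rightarrow> 'a set) \<Rightarrow> bool" where
  "good_generating_set X G G1 K \<longleftrightarrow>
     finite G1 \<and> pid X \<in> G1 \<and> (\<forall>g\<in>G1. pinv g \<in> G1) \<and> generates X G1 G
     \<and> (\<forall>g\<in>G1. compact (K g) \<and> K g \<subseteq> pdom g)
     \<and> generates X (compacted X G1 K) G"

definition pcomps :: "'a set \<Rightarrow> 'a pmap set \<Rightarrow> nat \<Rightarrow> 'a pmap set" where
  "pcomps X G2 n = {pword X ws | ws. length ws = n \<and> set ws \<subseteq> G2}"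

definition Phi :: "'a::metric_space set \<Rightarrow> 'a pmap set \<Rightarrow> real \<Rightarrow> 'a \<Rightarrow> 'a set" where
  "Phi X G2 \<delta> x = {y \<in> X. \<forall>n\<ge>1. \<forall>g\<in>pcomps X G2 n.
        x \<in> pdom g \<and> y \<in> pdom g \<longrightarrow> dist (pfun g x) (pfun g y) \<le> \<delta>}"

definition borel_probability :: "'a::metric_space set \<Rightarrow> 'a measure \<Rightarrow> bool" where
  "borel_probability X \<mu> \<longleftrightarrow> prob_space \<mu> \<and> sets \<mu> = sets (restrict_space borel X)"

definition weakly_expansive :: "'a::metric_space set \<Rightarrow> 'a pmap set \<Rightarrow> 'a measure \<Rightarrow> bool" where
  "weakly_expansive X G2 \<mu> \<longleftrightarrow>
     (\<exists>\<delta>>0. AE x in \<mu>. Phi X G2 \<delta> x \<in> sets \<mu> \<and> emeasure \<mu> (Phi X G2 \<delta> x) = 0)"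

end

theory Submission
  imports Defs
begin

text \<open>Equicontinuity makes all words in the equicontinuous generating set \<open>\<Gamma>\<close> uniformly
  equicontinuous. Every compacted generator is, on balls of a fixed radius \<open>r\<close> around points
  of its domain, a \<open>\<Gamma>\<close>-word: this comes from the compactness of the sets \<open>K g\<close> (a Lebesgue
  number) and the finiteness of \<open>G\<^sub>1\<close>. Composing, any \<open>G\<^sub>2\<close>-word coincides at two points
  closer than a uniform \<open>\<epsilon>\<close> with one \<open>\<Gamma>\<close>-word, so the two images stay \<open>\<delta>\<close>-close and
  \<open>\<Phi>\<^sup>2\<^sub>\<delta>(x)\<close> contains the \<open>\<epsilon>\<close>-ball around \<open>x\<close>. Finitely many \<open>\<epsilon>/2\<close>-balls cover
  the compact space; a ball of positive measure cannot contain a point whose \<open>\<Phi>\<close>-set is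
  null, so almost every point avoids every ball, which is absurd.\<close>

lemma pdom_pcomp [simp]: "z \<in> pdom (pcomp h g) \<longleftrightarrow> z \<in> pdom g \<and> pfun g z \<in> pdom h"
  by (simp add: pcomp_def pdom_def pfun_def Let_def)

lemma pfun_pcomp [simp]: "z \<in> pdom (pcomp h g) \<Longrightarrow> pfun (pcomp h g) z = pfun h (pfun g z)"
  by (simp add: pcomp_def pdom_def pfun_def Let_def)

lemma pdom_pid [simp]: "pdom (pid X) = X"
  by (simp add: pid_def pdom_def)

lemma pfun_pid [simp]: "z \<in> X \<Longrightarrow> pfun (pid X) z = z"
  by (simp add: pid_def pfun_def)

lemma pdom_prestr [simp]: "pdom (prestr g U) = U"
  by (simp add: prestr_def pdom_def)

lemma pfun_prestr [simp]: "z \<in> U \<Longrightarrow> pfun (prestr g U) z = pfun g z"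
  by (simp add: prestr_def pfun_def)

lemma pword_Nil [simp]: "pword X [] = pid X"
  by (simp add: pword_def)

lemma pword_Cons [simp]: "pword X (h # ws) = pcomp h (pword X ws)"
  by (simp add: pword_def)

lemma pdom_pword_subset: "pdom (pword X ws) \<subseteq> X"
  by (induction ws) auto

lemma pword_append_apply:
  assumes "z \<in> pdom (pword X ws)" "pfun (pword X ws) z \<in> pdom (pword X us)"
  shows "z \<in> pdom (pword X (us @ ws))
    \<and> pfun (pword X (us @ ws)) z = pfun (pword X us) (pfun (pword X ws) z)"
  using assms by (induction us) (auto simp: pdom_pword_subset[THEN subsetD])

lemma pword_agrees_with_member:
  assumes "\<forall>g\<in>\<Gamma>. \<forall>h\<in>\<Gamma>. pcomp h g \<in> \<Gamma>" "ws \<in> lists \<Gamma>" "ws \<noteq> []"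
  shows "\<exists>\<gamma>\<in>\<Gamma>. \<forall>z\<in>pdom (pword X ws). z \<in> pdom \<gamma> \<and> pfun (pword X ws) z = pfun \<gamma> z"
  using assms(2,3)
proof (induction ws)
  case Nil
  then show ?case by simp
next
  case (Cons h ws)
  show ?case
  proof (cases "ws = []")
    case True
    with Cons show ?thesis by (auto intro!: bexI[of _ h])
  next
    case False
    with Cons obtain \<gamma> where "\<gamma> \<in> \<Gamma>"
      and \<gamma>: "\<forall>z\<in>pdom (pword X ws). z \<in> pdom \<gamma> \<and> pfun (pword X ws) z = pfun \<gamma> z"
      by auto
    with assms(1) Cons have "pcomp h \<gamma> \<in> \<Gamma>" by auto
    with \<gamma> show ?thesis by (intro bexI[of _ "pcomp h \<gamma>"]) auto
  qed
qed

definition pequicontinuous :: "'a::metric_space set \<Rightarrow> 'a pmap set \<Rightarrow> bool" where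
  "pequicontinuous X \<Gamma> \<longleftrightarrow> (\<forall>\<epsilon>>0. \<exists>\<delta>>0. \<forall>x\<in>X. \<forall>y\<in>X. \<forall>g\<in>\<Gamma>.
     x \<in> pdom g \<and> y \<in> pdom g \<and> dist x y < \<delta> \<longrightarrow> dist (pfun g x) (pfun g y) < \<epsilon>)"

lemma pequicontinuous_pwords:
  assumes "\<forall>g\<in>\<Gamma>. \<forall>h\<in>\<Gamma>. pcomp h g \<in> \<Gamma>" "pequicontinuous X \<Gamma>"
  shows "pequicontinuous X (pword X ` lists \<Gamma>)"
  unfolding pequicontinuous_def
proof (intro allI impI)
  fix \<epsilon> :: real
  assume "\<epsilon> > 0"
  with assms(2) obtain \<delta> where "\<delta> > 0" and \<delta>: "\<forall>x\<in>X. \<forall>y\<in>X. \<forall>g\<in>\<Gamma>.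
      x \<in> pdom g \<and> y \<in> pdom g \<and> dist x y < \<delta> \<longrightarrow> dist (pfun g x) (pfun g y) < \<epsilon>"
    unfolding pequicontinuous_def by blast
  have "\<forall>x\<in>X. \<forall>y\<in>X. \<forall>w\<in>pword X ` lists \<Gamma>. x \<in> pdom w \<and> y \<in> pdom w \<and> dist x y < min \<delta> \<epsilon>
      \<longrightarrow> dist (pfun w x) (pfun w y) < \<epsilon>"
  proof (intro ballI impI, elim conjE)
    fix x y w
    assume "x \<in> X" "y \<in> X" "w \<in> pword X ` lists \<Gamma>" "x \<in> pdom w" "y \<in> pdom w"
      and "dist x y < min \<delta> \<epsilon>"
    then obtain ws where w: "w = pword X ws" and "ws \<in> lists \<Gamma>" by blast
    show "dist (pfun w x) (pfun w y) < \<epsilon>"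
    proof (cases "ws = []")
      case True
      with w \<open>x \<in> X\<close> \<open>y \<in> X\<close> \<open>dist x y < min \<delta> \<epsilon>\<close> show ?thesis by simp
    next
      case False
      obtain \<gamma> where "\<gamma> \<in> \<Gamma>"
        and "\<forall>z\<in>pdom w. z \<in> pdom \<gamma> \<and> pfun w z = pfun \<gamma> z"
        using pword_agrees_with_member[OF assms(1) \<open>ws \<in> lists \<Gamma>\<close> False] unfolding w by blast
      with \<delta> \<open>x \<in> X\<close> \<open>y \<in> X\<close> \<open>x \<in> pdom w\<close> \<open>y \<in> pdom w\<close> \<open>dist x y < min \<delta> \<epsilon>\<close>
      show ?thesis by auto
    qed
  qed
  moreover have "min \<delta> \<epsilon> > 0"
    using \<open>\<delta> > 0\<close> \<open>\<epsilon> > 0\<close> by simp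
  ultimately show "\<exists>\<delta>>0. \<forall>x\<in>X. \<forall>y\<in>X. \<forall>w\<in>pword X ` lists \<Gamma>.
      x \<in> pdom w \<and> y \<in> pdom w \<and> dist x y < \<delta> \<longrightarrow> dist (pfun w x) (pfun w y) < \<epsilon>"
    by blast
qed

definition agrees_with_word_on :: "'a set \<Rightarrow> 'a pmap set \<Rightarrow> 'a pmap \<Rightarrow> 'a set \<Rightarrow> bool" where
  "agrees_with_word_on X \<Gamma> g V \<longleftrightarrow> (\<exists>ws\<in>lists \<Gamma>. \<forall>y\<in>pdom g \<inter> V.
     y \<in> pdom (pword X ws) \<and> pfun g y = pfun (pword X ws) y)"

lemma agrees_with_word_on_subset:
  "agrees_with_word_on X \<Gamma> g V \<Longrightarrow> W \<subseteq> V \<Longrightarrow> agrees_with_word_on X \<Gamma> g W"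
  unfolding agrees_with_word_on_def by blast

lemma agrees_with_word_on_prestr:
  "agrees_with_word_on X \<Gamma> g V \<Longrightarrow> U \<subseteq> pdom g \<Longrightarrow> agrees_with_word_on X \<Gamma> (prestr g U) V"
  unfolding agrees_with_word_on_def by fastforce

lemma generator_in_generated:
  assumes "generates X \<Gamma> G" "g \<in> \<Gamma>"
  shows "g \<in> G"
proof -
  have "phomeo X g" using assms unfolding generates_def by blast
  then have "openin (top_of_set X) (pdom g)" unfolding phomeo_def by blast
  moreover have "pdom g \<subseteq> pdom (pword X [g]) \<and> (\<forall>y\<in>pdom g. pfun g y = pfun (pword X [g]) y)"
    using openin_imp_subset[OF calculation] by auto
  ultimately show ?thesis
    using assms \<open>phomeo X g\<close> unfolding generates_def
    by (auto intro!: exI[of _ "pdom g"] exI[of _ "[g]"])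
qed

lemma generated_memD:
  assumes "generates X \<Gamma> G" "g \<in> G"
  shows "phomeo X g"
    and "\<forall>x\<in>pdom g. \<exists>U ws. openin (top_of_set X) U \<and> x \<in> U \<and> U \<subseteq> pdom g
      \<and> set ws \<subseteq> \<Gamma> \<union> pinv ` \<Gamma> \<and> U \<subseteq> pdom (pword X ws)
      \<and> (\<forall>y\<in>U. pfun g y = pfun (pword X ws) y)"
  using assms unfolding generates_def by (elim conjE; simp only: mem_Collect_eq)+

lemma generated_locally_agrees_with_word:
  assumes "generates X \<Gamma> G" "\<forall>g\<in>\<Gamma>. pinv g \<in> \<Gamma>" "g \<in> G" "x \<in> pdom g"
  obtains V where "open V" "x \<in> V" "agrees_with_word_on X \<Gamma> g V"
proof -
  obtain U ws where U: "openin (top_of_set X) U" "x \<in> U"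
    and ws: "set ws \<subseteq> \<Gamma> \<union> pinv ` \<Gamma>" "U \<subseteq> pdom (pword X ws)"
      "\<forall>y\<in>U. pfun g y = pfun (pword X ws) y"
    using generated_memD(2)[OF assms(1,3), rule_format, OF assms(4)] by blast
  obtain V where "open V" "U = X \<inter> V"
    using U(1) unfolding openin_open by blast
  have "pdom g \<subseteq> X"
    using generated_memD(1)[OF assms(1,3)] unfolding phomeo_def by (blast dest: openin_imp_subset)
  have "ws \<in> lists \<Gamma>"
    using ws(1) assms(2) unfolding lists_eq_set by blast
  then have "agrees_with_word_on X \<Gamma> g V"
    unfolding agrees_with_word_on_def using ws(2,3) \<open>pdom g \<subseteq> X\<close> \<open>U = X \<inter> V\<close> by blast
  with \<open>open V\<close> \<open>x \<in> U\<close> \<open>U = X \<inter> V\<close> show thesis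
    using that by blast
qed

lemma eventually_Lebesgue_number:
  fixes K :: "'a::metric_space set"
  assumes "compact K" "\<And>x. x \<in> K \<Longrightarrow> \<exists>V. open V \<and> x \<in> V \<and> Q V"
    and "\<And>V W. Q V \<Longrightarrow> W \<subseteq> V \<Longrightarrow> Q W"
  shows "eventually (\<lambda>r. \<forall>x\<in>K. Q (ball x r)) (at_right 0)"
proof -
  have "K \<subseteq> \<Union>{V. open V \<and> Q V}"
    using assms(2) by blast
  then obtain e where "e > 0" and e: "\<And>x. x \<in> K \<Longrightarrow> \<exists>V\<in>{V. open V \<and> Q V}. ball x e \<subseteq> V"
    by (rule Heine_Borel_lemma[OF assms(1)]) auto
  have "\<forall>x\<in>K. Q (ball x r)" if "r < e" for r
  proof
    fix x assume "x \<in> K"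
    with e obtain V where "Q V" "ball x e \<subseteq> V" by blast
    moreover have "ball x r \<subseteq> ball x e" using \<open>r < e\<close> by auto
    ultimately show "Q (ball x r)" using assms(3) by blast
  qed
  with \<open>e > 0\<close> show ?thesis
    unfolding eventually_at_right_field by blast
qed

lemma eventually_agrees_with_word_near_compact:
  assumes "generates X \<Gamma> G" "\<forall>g\<in>\<Gamma>. pinv g \<in> \<Gamma>" "g \<in> G" "compact K" "K \<subseteq> pdom g"
  shows "eventually (\<lambda>r. \<forall>x\<in>K. agrees_with_word_on X \<Gamma> g (ball x r)) (at_right 0)"
proof (rule eventually_Lebesgue_number[OF \<open>compact K\<close>])
  show "\<exists>V. open V \<and> x \<in> V \<and> agrees_with_word_on X \<Gamma> g V" if "x \<in> K" for x
  proof -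
    from that \<open>K \<subseteq> pdom g\<close> have "x \<in> pdom g" by blast
    then obtain V where "open V" "x \<in> V" "agrees_with_word_on X \<Gamma> g V"
      by (rule generated_locally_agrees_with_word[OF assms(1-3)])
    then show ?thesis by blast
  qed
qed (rule agrees_with_word_on_subset)

lemma eventually_compacted_agrees_with_word:
  assumes "good_generating_set X G G1 K" "generates X \<Gamma> G" "\<forall>g\<in>\<Gamma>. pinv g \<in> \<Gamma>"
  shows "eventually (\<lambda>r. \<forall>h\<in>compacted X G1 K. \<forall>x\<in>pdom h.
    agrees_with_word_on X \<Gamma> h (ball x r)) (at_right 0)"
proof -
  from assms(1) have "finite G1" "generates X G1 G"
    and K: "\<forall>g\<in>G1. compact (K g) \<and> K g \<subseteq> pdom g"
    unfolding good_generating_set_def by blast+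
  have "\<forall>g\<in>G1. eventually (\<lambda>r. \<forall>x\<in>K g. agrees_with_word_on X \<Gamma> g (ball x r)) (at_right 0)"
  proof
    fix g assume "g \<in> G1"
    then have "g \<in> G" by (rule generator_in_generated[OF \<open>generates X G1 G\<close>])
    with K \<open>g \<in> G1\<close>
    show "eventually (\<lambda>r. \<forall>x\<in>K g. agrees_with_word_on X \<Gamma> g (ball x r)) (at_right 0)"
      by (intro eventually_agrees_with_word_near_compact[OF assms(2,3)]) auto
  qed
  then have "eventually (\<lambda>r. \<forall>g\<in>G1. \<forall>x\<in>K g. agrees_with_word_on X \<Gamma> g (ball x r)) (at_right 0)"
    by (rule eventually_ball_finite[OF \<open>finite G1\<close>])
  then show ?thesis
  proof (rule eventually_mono)
    fix r assume r: "\<forall>g\<in>G1. \<forall>x\<in>K g. agrees_with_word_on X \<Gamma> g (ball x r)"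
    show "\<forall>h\<in>compacted X G1 K. \<forall>x\<in>pdom h. agrees_with_word_on X \<Gamma> h (ball x r)"
    proof (intro ballI)
      fix h x assume "h \<in> compacted X G1 K" "x \<in> pdom h"
      then obtain g where "g \<in> G1" and h: "h = prestr g (top_of_set X interior_of K g)"
        unfolding compacted_def by blast
      have "top_of_set X interior_of K g \<subseteq> K g" by (rule interior_of_subset)
      with K \<open>g \<in> G1\<close> have interior_dom: "top_of_set X interior_of K g \<subseteq> pdom g" by blast
      have "x \<in> K g"
        using \<open>x \<in> pdom h\<close> \<open>top_of_set X interior_of K g \<subseteq> K g\<close> unfolding h by auto
      with r \<open>g \<in> G1\<close> have "agrees_with_word_on X \<Gamma> g (ball x r)" by blast
      then show "agrees_with_word_on X \<Gamma> h (ball x r)"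
        unfolding h using interior_dom by (rule agrees_with_word_on_prestr)
    qed
  qed
qed

text \<open>The induction runs through the \<open>\<Gamma>\<close>-word built so far: by equicontinuity it keeps the
  two points within \<open>r\<close> of each other, so the next letter is again a \<open>\<Gamma>\<close>-word at both.\<close>

lemma pword_pair_agrees_with_word:
  assumes local: "\<forall>h\<in>H. \<forall>x\<in>pdom h. agrees_with_word_on X \<Gamma> h (ball x r)"
    and modulus: "\<forall>x\<in>X. \<forall>y\<in>X. \<forall>w\<in>pword X ` lists \<Gamma>.
      x \<in> pdom w \<and> y \<in> pdom w \<and> dist x y < \<epsilon> \<longrightarrow> dist (pfun w x) (pfun w y) < r"
    and "hs \<in> lists H" "x \<in> pdom (pword X hs)" "y \<in> pdom (pword X hs)" "dist x y < \<epsilon>"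
  shows "\<exists>ws\<in>lists \<Gamma>. x \<in> pdom (pword X ws) \<and> y \<in> pdom (pword X ws)
    \<and> pfun (pword X hs) x = pfun (pword X ws) x \<and> pfun (pword X hs) y = pfun (pword X ws) y"
  using assms(3-5)
proof (induction hs)
  case Nil
  then show ?case by (auto intro!: bexI[of _ "[]"])
next
  case (Cons h hs)
  from Cons.prems have x: "x \<in> pdom (pword X hs)" "pfun (pword X hs) x \<in> pdom h"
    and y: "y \<in> pdom (pword X hs)" "pfun (pword X hs) y \<in> pdom h"
    by simp_all
  obtain ws where "ws \<in> lists \<Gamma>" and ws_dom: "x \<in> pdom (pword X ws)" "y \<in> pdom (pword X ws)"
    and hs_ws: "pfun (pword X hs) x = pfun (pword X ws) x" "pfun (pword X hs) y = pfun (pword X ws) y"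
    using Cons.IH[OF x(1) y(1)] by (elim bexE conjE)
  define x' where "x' = pfun (pword X ws) x"
  define y' where "y' = pfun (pword X ws) y"
  have "dist x' y' < r"
    unfolding x'_def y'_def
  proof (rule modulus[rule_format])
    show "x \<in> X" "y \<in> X"
      using ws_dom pdom_pword_subset[of X ws] by blast+
    show "pword X ws \<in> pword X ` lists \<Gamma>"
      using \<open>ws \<in> lists \<Gamma>\<close> by (rule imageI)
    show "x \<in> pdom (pword X ws) \<and> y \<in> pdom (pword X ws) \<and> dist x y < \<epsilon>"
      using ws_dom \<open>dist x y < \<epsilon>\<close> by blast
  qed
  then have "r > 0" by (rule le_less_trans[OF zero_le_dist])
  have "x' \<in> pdom h" "y' \<in> pdom h"
    using x(2) y(2) hs_ws unfolding x'_def y'_def by simp_all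
  with \<open>dist x' y' < r\<close> \<open>r > 0\<close>
  have x'_near: "x' \<in> pdom h \<inter> ball x' r" and y'_near: "y' \<in> pdom h \<inter> ball x' r"
    by auto
  have "agrees_with_word_on X \<Gamma> h (ball x' r)"
    using local \<open>h \<in> H\<close> \<open>x' \<in> pdom h\<close> by blast
  then obtain us where "us \<in> lists \<Gamma>" and us: "\<forall>z\<in>pdom h \<inter> ball x' r.
      z \<in> pdom (pword X us) \<and> pfun h z = pfun (pword X us) z"
    unfolding agrees_with_word_on_def by (elim bexE)
  have "pfun (pword X (h # hs)) x = pfun h x'" "pfun (pword X (h # hs)) y = pfun h y'"
    using Cons.prems hs_ws unfolding x'_def y'_def by simp_all
  with us x'_near y'_near
  have "x' \<in> pdom (pword X us)" "y' \<in> pdom (pword X us)"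
    and "pfun (pword X (h # hs)) x = pfun (pword X us) x'"
    and "pfun (pword X (h # hs)) y = pfun (pword X us) y'"
    by simp_all
  with pword_append_apply[OF ws_dom(1), of us] pword_append_apply[OF ws_dom(2), of us]
  have "x \<in> pdom (pword X (us @ ws)) \<and> y \<in> pdom (pword X (us @ ws))
    \<and> pfun (pword X (h # hs)) x = pfun (pword X (us @ ws)) x
    \<and> pfun (pword X (h # hs)) y = pfun (pword X (us @ ws)) y"
    unfolding x'_def y'_def by simp
  moreover have "us @ ws \<in> lists \<Gamma>"
    using \<open>us \<in> lists \<Gamma>\<close> \<open>ws \<in> lists \<Gamma>\<close> by simp
  ultimately show ?case by blast
qed

lemma ball_subset_Phi:
  assumes "\<forall>h\<in>H. \<forall>x\<in>pdom h. agrees_with_word_on X \<Gamma> h (ball x r)"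
    and modulus: "\<forall>x\<in>X. \<forall>y\<in>X. \<forall>w\<in>pword X ` lists \<Gamma>.
      x \<in> pdom w \<and> y \<in> pdom w \<and> dist x y < \<epsilon> \<longrightarrow> dist (pfun w x) (pfun w y) < r"
    and "r \<le> \<delta>"
  shows "X \<inter> ball x \<epsilon> \<subseteq> Phi X H \<delta> x"
proof
  fix y assume y: "y \<in> X \<inter> ball x \<epsilon>"
  then have "dist x y < \<epsilon>" by simp
  have "dist (pfun g x) (pfun g y) \<le> \<delta>"
    if "g \<in> pcomps X H n" and x_dom: "x \<in> pdom g" and y_dom: "y \<in> pdom g" for g n
  proof -
    from \<open>g \<in> pcomps X H n\<close> obtain hs where g: "g = pword X hs" and "hs \<in> lists H"
      unfolding pcomps_def lists_eq_set by blast
    obtain ws where "ws \<in> lists \<Gamma>" "x \<in> pdom (pword X ws)" "y \<in> pdom (pword X ws)"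
      and eq: "pfun g x = pfun (pword X ws) x" "pfun g y = pfun (pword X ws) y"
      using pword_pair_agrees_with_word[OF assms(1,2) \<open>hs \<in> lists H\<close> x_dom[unfolded g] y_dom[unfolded g]
          \<open>dist x y < \<epsilon>\<close>]
      unfolding g by blast
    have "x \<in> X" "y \<in> X"
      using \<open>x \<in> pdom (pword X ws)\<close> \<open>y \<in> pdom (pword X ws)\<close> pdom_pword_subset[of X ws] by blast+
    moreover have "pword X ws \<in> pword X ` lists \<Gamma>"
      using \<open>ws \<in> lists \<Gamma>\<close> by blast
    ultimately have "dist (pfun (pword X ws) x) (pfun (pword X ws) y) < r"
      using modulus \<open>x \<in> pdom (pword X ws)\<close> \<open>y \<in> pdom (pword X ws)\<close> \<open>dist x y < \<epsilon>\<close> by blast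
    with eq \<open>r \<le> \<delta>\<close> show ?thesis by simp
  qed
  with y show "y \<in> Phi X H \<delta> x" unfolding Phi_def by auto
qed

lemma AE_not_in_if_subset_null:
  assumes "B \<in> sets \<mu>" "\<And>z. z \<in> B \<Longrightarrow> B \<subseteq> P z"
    and null: "AE z in \<mu>. P z \<in> sets \<mu> \<and> emeasure \<mu> (P z) = 0"
  shows "AE z in \<mu>. z \<notin> B"
proof (cases "emeasure \<mu> B = 0")
  case True
  with assms(1) show ?thesis by (intro AE_not_in) (simp add: null_sets_def)
next
  case False
  from null show ?thesis
  proof (rule eventually_mono)
    fix z assume P: "P z \<in> sets \<mu> \<and> emeasure \<mu> (P z) = 0"
    show "z \<notin> B"
    proof
      assume "z \<in> B"
      with P assms(2) have "emeasure \<mu> B \<le> emeasure \<mu> (P z)"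
        by (intro emeasure_mono) auto
      with P False show False by simp
    qed
  qed
qed

lemma not_AE_null_uniform_neighbourhood:
  assumes "compact X" "borel_probability X \<mu>" "\<epsilon> > 0" "\<And>x. X \<inter> ball x \<epsilon> \<subseteq> P x"
  shows "\<not> (AE x in \<mu>. P x \<in> sets \<mu> \<and> emeasure \<mu> (P x) = 0)"
proof
  assume null: "AE x in \<mu>. P x \<in> sets \<mu> \<and> emeasure \<mu> (P x) = 0"
  have "prob_space \<mu>" and sets: "sets \<mu> = sets (restrict_space borel X)"
    using assms(2) unfolding borel_probability_def by auto
  then have "space \<mu> = X"
    using sets_eq_imp_space_eq[OF sets] by (simp add: space_restrict_space)
  obtain C where "finite C" and C: "X \<subseteq> (\<Union>c\<in>C. ball c (\<epsilon>/2))"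
  proof (rule compactE_image[OF assms(1), of X "\<lambda>c. ball c (\<epsilon>/2)"])
    show "X \<subseteq> (\<Union>c\<in>X. ball c (\<epsilon>/2))" using \<open>\<epsilon> > 0\<close> by auto
  qed (use that in auto)
  have avoid: "AE z in \<mu>. z \<notin> X \<inter> ball c (\<epsilon>/2)" for c
  proof (rule AE_not_in_if_subset_null[OF _ _ null])
    show "X \<inter> ball c (\<epsilon>/2) \<in> sets \<mu>"
      unfolding sets sets_restrict_space by auto
    fix z assume z: "z \<in> X \<inter> ball c (\<epsilon>/2)"
    have "X \<inter> ball c (\<epsilon>/2) \<subseteq> X \<inter> ball z \<epsilon>"
    proof
      fix w assume w: "w \<in> X \<inter> ball c (\<epsilon>/2)"
      have "dist z w < \<epsilon>"
        using z w dist_triangle_half_l[of z c \<epsilon> w] by (simp add: dist_commute)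
      with w show "w \<in> X \<inter> ball z \<epsilon>" by simp
    qed
    also have "\<dots> \<subseteq> P z" by (rule assms(4))
    finally show "X \<inter> ball c (\<epsilon>/2) \<subseteq> P z" .
  qed
  have "AE z in \<mu>. \<forall>c\<in>C. z \<notin> X \<inter> ball c (\<epsilon>/2)"
    by (rule eventually_ball_finite[OF \<open>finite C\<close>]) (intro ballI avoid)
  then have "AE z in \<mu>. False"
    using AE_space by eventually_elim (use C \<open>space \<mu> = X\<close> in blast)
  with \<open>prob_space \<mu>\<close> show False by (simp add: prob_space.AE_False)
qed

theorem mainTheorem18:
  fixes X :: "'a::metric_space set"
    and G G1 :: "'a pmap set"
    and K :: "'a pmap \<Rightarrow> 'a set"
  assumes "compact X"
    and "pseudogroup X G"
    and "equicontinuous_pg X G"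
    and "good_generating_set X G G1 K"
  shows "\<not> (\<exists>\<mu>. borel_probability X \<mu> \<and> weakly_expansive X (compacted X G1 K) \<mu>)"
proof
  assume "\<exists>\<mu>. borel_probability X \<mu> \<and> weakly_expansive X (compacted X G1 K) \<mu>"
  then obtain \<mu> \<delta> where "borel_probability X \<mu>" "\<delta> > 0" and null_Phi:
    "AE x in \<mu>. Phi X (compacted X G1 K) \<delta> x \<in> sets \<mu>
       \<and> emeasure \<mu> (Phi X (compacted X G1 K) \<delta> x) = 0"
    unfolding weakly_expansive_def by blast
  from assms(3) obtain \<Gamma> where "generates X \<Gamma> G" "\<forall>g\<in>\<Gamma>. \<forall>h\<in>\<Gamma>. pcomp h g \<in> \<Gamma>"
    "\<forall>g\<in>\<Gamma>. pinv g \<in> \<Gamma>" "pequicontinuous X \<Gamma>"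
    unfolding equicontinuous_pg_def pequicontinuous_def by blast
  have "eventually (\<lambda>r. (\<forall>h\<in>compacted X G1 K. \<forall>x\<in>pdom h. agrees_with_word_on X \<Gamma> h (ball x r))
      \<and> 0 < r \<and> r < \<delta>) (at_right 0)"
    using eventually_compacted_agrees_with_word[OF assms(4) \<open>generates X \<Gamma> G\<close> \<open>\<forall>g\<in>\<Gamma>. pinv g \<in> \<Gamma>\<close>]
      eventually_at_right_less \<open>\<delta> > 0\<close>
    by (intro eventually_conj) (auto simp: eventually_at_right_field)
  then obtain r where "r > 0" "r < \<delta>"
    and local: "\<forall>h\<in>compacted X G1 K. \<forall>x\<in>pdom h. agrees_with_word_on X \<Gamma> h (ball x r)"
    using eventually_happens'[OF trivial_limit_at_right_real] by blast
  obtain \<epsilon> where "\<epsilon> > 0" and modulus: "\<forall>x\<in>X. \<forall>y\<in>X. \<forall>w\<in>pword X ` lists \<Gamma>.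
      x \<in> pdom w \<and> y \<in> pdom w \<and> dist x y < \<epsilon> \<longrightarrow> dist (pfun w x) (pfun w y) < r"
    using pequicontinuous_pwords[OF \<open>\<forall>g\<in>\<Gamma>. \<forall>h\<in>\<Gamma>. pcomp h g \<in> \<Gamma>\<close> \<open>pequicontinuous X \<Gamma>\<close>,
        unfolded pequicontinuous_def, rule_format, OF \<open>r > 0\<close>]
    by blast
  have "X \<inter> ball x \<epsilon> \<subseteq> Phi X (compacted X G1 K) \<delta> x" for x
    using ball_subset_Phi[OF local modulus less_imp_le[OF \<open>r < \<delta>\<close>]] .
  with not_AE_null_uniform_neighbourhood[OF assms(1) \<open>borel_probability X \<mu>\<close> \<open>\<epsilon> > 0\<close>]
  show False using null_Phi by blast
qed

end
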